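(* Let $S\subseteq\mathbb{N}^{\mathbb{N}}$. Consider the following game: Alice fixes a sequence $f\in\mathbb{N}^{\mathbb{N}}$ (she has no information). At the start, Bob chooses a countable set $\Sigma$ of symbols of $\mathscr{L}_{\max}$ and a listing $\phi_0,\phi_1,\dots$ of all quantifier-free sentences of $\mathscr{L}_{\max}\cap\Sigma$; then on his $n$th move Bob is told the value $f(\phi_n)$ (and nothing else about $f$), and plays a natural number $b_n$ depending only on $f(\phi_0),\dots,f(\phi_n)$. Bob wins if either $f\in S$ and $b_n=1$ for all sufficiently large $n$, or $f\notin S$ and $b_n=0$ for all sufficiently large $n$. Then Bob has a winning strategy if and only if $S$ is guessable, i.e. there is $G:\mathbb{N}^{<\mathbb{N}}\to\mathbb{N}$ such that for every $f\in\mathbb{N}^{\mathbb{N}}$, $\lim_{n\to\infty}G(f(0),\dots,f(n))$ equals $1$ if $f\in S$ and $0$ if $f\notin S$.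
   Context: The language $\mathscr{L}_{\max}$ is the first-order language (with equality) having: a constant symbol $\overline{n}$ for each $n\in\mathbb{N}$; an $n$-ary function symbol $\tilde w$ for each $w:\mathbb{N}^n\to\mathbb{N}$; an $n$-ary predicate symbol $\tilde p$ for each $p\subseteq\mathbb{N}^n$; a special unary function symbol $\mathbf{f}$; and, for every $n$ and every $G:\mathbb{N}^n\times\mathbb{N}^{<\mathbb{N}}\to\mathbb{N}$, an $(n+1)$-ary function symbol $G\circ\mathbf{f}$. For $f\in\mathbb{N}^{\mathbb{N}}$, $\mathscr{M}_f$ is the structure with universe $\mathbb{N}$ interpreting $\overline n$ as $n$, $\tilde w$ as $w$, $\tilde p$ as $p$, $\mathbf f$ as $f$, and $G\circ\mathbf f$ as $(m_1,\dots,m_n,m)\mapsto G(m_1,\dots,m_n,f(0),\dots,f(m))$. For a sentence $\phi$, $f(\phi)=1$ if $\mathscr{M}_f\models\phi$ and $f(\phi)=0$ otherwise. "Quantifier-free" means containing no quantifiers at all (not even bounded ones). For a set $\Sigma$ of symbols of $\mathscr{L}_{\max}$, a sentence "of $\mathscr{L}_{\max}\cap\Sigma$" is an $\mathscr{L}_{\max}$-sentence all of whose non-logical symbols lie in $\Sigma$. *)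

theory Defs
  imports Complex_Main "HOL-Library.Countable_Set"
begin

text \<open>An n-ary function is represented by a function on lists,
  required (by wf_sym) to be 0 on lists of length different from n, so that symbols
  correspond exactly to the paper's symbols.\<close>

datatype sym =
    SConst nat
  | SFun nat "nat list \<Rightarrow> nat"
  | SPred nat "nat list set"
  | SF
  | SG nat "nat list \<Rightarrow> nat list \<Rightarrow> nat"

definition wf_sym :: "sym \<Rightarrow> bool" where
  "wf_sym s = (case s of
      SConst _ \<Rightarrow> True
    | SFun n w \<Rightarrow> (\<forall>xs. length xs \<noteq> n \<longrightarrow> w xs = 0)
    | SPred n p \<Rightarrow> (\<forall>xs\<in>p. length xs = n)
    | SF \<Rightarrow> True
    | SG n G \<Rightarrow> (\<forall>xs ys. (length xs \<noteq> n \<or> ys = []) \<longrightarrow> G xs ys = 0))"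

text \<open>Closed terms (no variables: quantifier-free sentences contain none).\<close>
datatype trm =
    Const nat
  | App nat "nat list \<Rightarrow> nat" "trm list"
  | FApp trm
  | GApp nat "nat list \<Rightarrow> nat list \<Rightarrow> nat" "trm list" trm

datatype fm =
    Eq trm trm
  | Rel nat "nat list set" "trm list"
  | Neg fm
  | Conj fm fm
  | Disj fm fm
  | Imp fm fm

fun syms_trm :: "trm \<Rightarrow> sym set" where
  "syms_trm (Const n) = {SConst n}"
| "syms_trm (App n w ts) = insert (SFun n w) (\<Union>t\<in>set ts. syms_trm t)"
| "syms_trm (FApp t) = insert SF (syms_trm t)"
| "syms_trm (GApp n G ts t) = insert (SG n G) (syms_trm t \<union> (\<Union>u\<in>set ts. syms_trm u))"

fun wf_trm :: "trm \<Rightarrow> bool" where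
  "wf_trm (Const n) = True"
| "wf_trm (App n w ts) = (length ts = n \<and> (\<forall>t\<in>set ts. wf_trm t))"
| "wf_trm (FApp t) = wf_trm t"
| "wf_trm (GApp n G ts t) = (length ts = n \<and> wf_trm t \<and> (\<forall>u\<in>set ts. wf_trm u))"

fun syms_fm :: "fm \<Rightarrow> sym set" where
  "syms_fm (Eq s t) = syms_trm s \<union> syms_trm t"
| "syms_fm (Rel n p ts) = insert (SPred n p) (\<Union>t\<in>set ts. syms_trm t)"
| "syms_fm (Neg a) = syms_fm a"
| "syms_fm (Conj a b) = syms_fm a \<union> syms_fm b"
| "syms_fm (Disj a b) = syms_fm a \<union> syms_fm b"
| "syms_fm (Imp a b) = syms_fm a \<union> syms_fm b"

fun wf_fm :: "fm \<Rightarrow> bool" where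
  "wf_fm (Eq s t) = (wf_trm s \<and> wf_trm t)"
| "wf_fm (Rel n p ts) = (length ts = n \<and> (\<forall>t\<in>set ts. wf_trm t))"
| "wf_fm (Neg a) = wf_fm a"
| "wf_fm (Conj a b) = (wf_fm a \<and> wf_fm b)"
| "wf_fm (Disj a b) = (wf_fm a \<and> wf_fm b)"
| "wf_fm (Imp a b) = (wf_fm a \<and> wf_fm b)"

definition qf_sentences :: "sym set \<Rightarrow> fm set" where
  "qf_sentences Sig = {\<phi>. wf_fm \<phi> \<and> (\<forall>s\<in>syms_fm \<phi>. wf_sym s) \<and> syms_fm \<phi> \<subseteq> Sig}"

fun eval_trm :: "(nat \<Rightarrow> nat) \<Rightarrow> trm \<Rightarrow> nat" where
  "eval_trm f (Const n) = n"
| "eval_trm f (App n w ts) = w (map (eval_trm f) ts)"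
| "eval_trm f (FApp t) = f (eval_trm f t)"
| "eval_trm f (GApp n G ts t) = G (map (eval_trm f) ts) (map f [0..<Suc (eval_trm f t)])"

fun holds :: "(nat \<Rightarrow> nat) \<Rightarrow> fm \<Rightarrow> bool" where
  "holds f (Eq s t) = (eval_trm f s = eval_trm f t)"
| "holds f (Rel n p ts) = (map (eval_trm f) ts \<in> p)"
| "holds f (Neg a) = (\<not> holds f a)"
| "holds f (Conj a b) = (holds f a \<and> holds f b)"
| "holds f (Disj a b) = (holds f a \<or> holds f b)"
| "holds f (Imp a b) = (holds f a \<longrightarrow> holds f b)"

text \<open>f(phi) \<in> {0,1}.\<close>
definition fval :: "(nat \<Rightarrow> nat) \<Rightarrow> fm \<Rightarrow> nat" where
  "fval f \<phi> = (if holds f \<phi> then 1 else 0)"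

text \<open>Bob's winning strategy: a countable set Sig of symbols, a listing phi of all
  quantifier-free sentences of L_max \<inter> Sig, and a move function B where
  b_n = B [f(phi_0),...,f(phi_n)].\<close>
definition bob_wins :: "(nat \<Rightarrow> nat) set \<Rightarrow> sym set \<Rightarrow> (nat \<Rightarrow> fm) \<Rightarrow> (nat list \<Rightarrow> nat) \<Rightarrow> bool" where
  "bob_wins S Sig phi B =
     (\<forall>f. (f \<in> S \<longrightarrow> (\<exists>N. \<forall>n\<ge>N. B (map (\<lambda>k. fval f (phi k)) [0..<Suc n]) = 1)) \<and>
          (f \<notin> S \<longrightarrow> (\<exists>N. \<forall>n\<ge>N. B (map (\<lambda>k. fval f (phi k)) [0..<Suc n]) = 0)))"

definition bob_has_winning_strategy :: "(nat \<Rightarrow> nat) set \<Rightarrow> bool" where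
  "bob_has_winning_strategy S =
     (\<exists>Sig phi B. countable Sig \<and> Sig \<subseteq> Collect wf_sym \<and>
        range phi = qf_sentences Sig \<and> bob_wins S Sig phi B)"

definition guessable :: "(nat \<Rightarrow> nat) set \<Rightarrow> bool" where
  "guessable S =
     (\<exists>G :: nat list \<Rightarrow> nat. \<forall>f.
        (\<lambda>n. G (map f [0..<Suc n])) \<longlonglongrightarrow> (if f \<in> S then 1 else 0))"

end

theory Submission
  imports Defs
begin

(* The key fact is continuity: the truth value of a quantifier-free sentence in M_f depends
   only on finitely many values f(0),...,f(N-1) (eventually_determined_by_holds). Hence every
   sentence is decided by all sufficiently long prefixes of f.

   Bob wins => guessable: from f(0),...,f(n-1) compute the answers to the longest initial block
   of Bob's listing decided by this prefix and play Bob's strategy on them. The block grows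
   without bound, so the guess is eventually Bob's eventual answer.

   Guessable => Bob wins: with G also available as the symbol G o f, Bob lists the sentences
   "G(f(0),...,f(k)) = 1" at even positions and all quantifier-free sentences over his
   signature at odd positions; repeating the latest guess wins. That all sentences can be
   listed needs countability of the quantifier-free sentences over a countable signature,
   shown by coding them as elements of a countable datatype. *)

definition agree :: "nat \<Rightarrow> (nat \<Rightarrow> nat) \<Rightarrow> (nat \<Rightarrow> nat) \<Rightarrow> bool" where
  "agree N g f \<longleftrightarrow> (\<forall>i<N. g i = f i)"

definition determined_by :: "nat \<Rightarrow> (nat \<Rightarrow> nat) \<Rightarrow> ((nat \<Rightarrow> nat) \<Rightarrow> 'a) \<Rightarrow> bool" where
  "determined_by N f F \<longleftrightarrow> (\<forall>g. agree N g f \<longrightarrow> F g = F f)"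

lemma determined_by_map:
  assumes "\<forall>t\<in>set ts. determined_by N f (\<lambda>g. F g t)"
  shows "determined_by N f (\<lambda>g. map (F g) ts)"
  using assms unfolding determined_by_def by simp

lemma eventually_determined_by_map:
  assumes "\<And>t. t \<in> set ts \<Longrightarrow> \<forall>\<^sub>F N in sequentially. determined_by N f (\<lambda>g. F g t)"
  shows "\<forall>\<^sub>F N in sequentially. determined_by N f (\<lambda>g. map (F g) ts)"
proof -
  have "\<forall>\<^sub>F N in sequentially. \<forall>t\<in>set ts. determined_by N f (\<lambda>g. F g t)"
    using assms by (simp add: eventually_ball_finite_distrib)
  then show ?thesis
    by eventually_elim (rule determined_by_map)
qed

lemma agree_at: "agree N g f \<Longrightarrow> i < N \<Longrightarrow> g i = f i"
  unfolding agree_def by simp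

(* Continuity of closed terms: the value of t in M_f depends only on a finite part of f.
   For f(t) and G(t_1,...,t_n,t) the extra values read are f(0),...,f(value of t). *)
lemma eventually_determined_by_trm:
  "\<forall>\<^sub>F N in sequentially. determined_by N f (\<lambda>g. eval_trm g t)"
proof (induction t)
  case (Const n)
  show ?case by (simp add: determined_by_def)
next
  case (App n w ts)
  then have "\<forall>\<^sub>F N in sequentially. determined_by N f (\<lambda>g. map (eval_trm g) ts)"
    by (intro eventually_determined_by_map)
  then show ?case
    by eventually_elim (simp add: determined_by_def del: map_eq_conv)
next
  case (FApp t)
  have "\<forall>\<^sub>F N in sequentially. eval_trm f t < N"
    by simp
  with FApp show ?case
    by eventually_elim (simp add: determined_by_def agree_at)
next
  case (GApp n G ts t)
  have "\<forall>\<^sub>F N in sequentially. determined_by N f (\<lambda>g. map (eval_trm g) ts)"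
    using GApp.IH(1) by (intro eventually_determined_by_map)
  moreover have "\<forall>\<^sub>F N in sequentially. eval_trm f t < N"
    by simp
  ultimately show ?case using GApp.IH(2)
  proof eventually_elim
    case (elim N)
    have "eval_trm g (GApp n G ts t) = eval_trm f (GApp n G ts t)" if "agree N g f" for g
    proof -
      have "map g [0..<Suc (eval_trm f t)] = map f [0..<Suc (eval_trm f t)]"
        using elim(2) that by (simp add: agree_at del: upt_Suc)
      with elim(1,3) that show ?thesis
        by (simp add: determined_by_def del: upt_Suc map_eq_conv)
    qed
    then show ?case by (simp add: determined_by_def)
  qed
qed

lemma eventually_determined_by_holds:
  "\<forall>\<^sub>F N in sequentially. determined_by N f (\<lambda>g. holds g \<phi>)"
proof (induction \<phi>)
  case (Eq s t)
  show ?case using eventually_determined_by_trm[of f s] eventually_determined_by_trm[of f t]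
    by eventually_elim (simp add: determined_by_def)
next
  case (Rel n p ts)
  have "\<forall>\<^sub>F N in sequentially. determined_by N f (\<lambda>g. map (eval_trm g) ts)"
    by (intro eventually_determined_by_map eventually_determined_by_trm)
  then show ?case by eventually_elim (simp add: determined_by_def del: map_eq_conv)
next
  case (Neg a)
  then show ?case by eventually_elim (simp add: determined_by_def)
next
  case (Conj a b)
  then show ?case by eventually_elim (simp add: determined_by_def)
next
  case (Disj a b)
  then show ?case by eventually_elim (simp add: determined_by_def)
next
  case (Imp a b)
  then show ?case by eventually_elim (simp add: determined_by_def)
qed

(* P eventually predicts the value c from the finite prefixes a(0),...,a(n-1) of the sequence a.
   Both guessability and Bob winning are instances of this notion. *)
definition predicts :: "(nat list \<Rightarrow> nat) \<Rightarrow> (nat \<Rightarrow> nat) \<Rightarrow> nat \<Rightarrow> bool" where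
  "predicts P a c \<longleftrightarrow> (\<forall>\<^sub>F n in sequentially. P (map a [0..<n]) = c)"

lemma predicts_Suc:
  "predicts P a c \<longleftrightarrow> (\<forall>\<^sub>F n in sequentially. P (map a [0..<Suc n]) = c)"
  unfolding predicts_def by (rule eventually_sequentially_Suc[symmetric])

lemma guessable_iff_predicts:
  "guessable S \<longleftrightarrow> (\<exists>G. \<forall>f. predicts G f (if f \<in> S then 1 else 0))"
  unfolding guessable_def predicts_Suc tendsto_discrete ..

lemma bob_wins_iff_predicts:
  "bob_wins S Sig phi B \<longleftrightarrow> (\<forall>f. predicts B (\<lambda>k. fval f (phi k)) (if f \<in> S then 1 else 0))"
  unfolding bob_wins_def predicts_Suc eventually_sequentially by simp

definition zero_ext :: "nat list \<Rightarrow> nat \<Rightarrow> nat" where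
  "zero_ext xs i = (if i < length xs then xs ! i else 0)"

definition decided :: "nat list \<Rightarrow> fm \<Rightarrow> bool" where
  "decided xs \<phi> \<longleftrightarrow> determined_by (length xs) (zero_ext xs) (\<lambda>g. holds g \<phi>)"

lemma agree_zero_ext_prefix: "agree n f (zero_ext (map f [0..<n]))"
  unfolding agree_def zero_ext_def by simp

lemma determined_by_transfer:
  assumes "determined_by N f F" "N \<le> M" "agree M h f"
  shows "determined_by M h F"
  unfolding determined_by_def
proof (intro allI impI)
  fix g assume "agree M g h"
  with assms(2,3) have "agree N g f" and "agree N h f"
    unfolding agree_def by simp_all
  with assms(1) show "F g = F h"
    unfolding determined_by_def by metis
qed

lemma decided_prefix_holds:
  assumes "decided (map f [0..<n]) \<phi>"
  shows "holds (zero_ext (map f [0..<n])) \<phi> = holds f \<phi>"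
  using assms agree_zero_ext_prefix[of n f] unfolding decided_def determined_by_def agree_def
  by (metis length_map diff_zero length_upt)

lemma eventually_decided_prefix:
  "\<forall>\<^sub>F n in sequentially. decided (map f [0..<n]) \<phi>"
proof -
  obtain N where N: "determined_by N f (\<lambda>g. holds g \<phi>)"
    using eventually_determined_by_holds[of f \<phi>] eventually_sequentially by auto
  have "decided (map f [0..<n]) \<phi>" if "N \<le> n" for n
    unfolding decided_def
    using determined_by_transfer[OF N that] agree_zero_ext_prefix[of n f]
    unfolding agree_def by simp
  then show ?thesis
    unfolding eventually_sequentially by blast
qed

definition settled_count :: "(nat \<Rightarrow> fm) \<Rightarrow> nat list \<Rightarrow> nat" where
  "settled_count phi xs = (LEAST m. m = length xs \<or> \<not> decided xs (phi m))"

lemma settled_count_decided: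
  assumes "k < settled_count phi xs"
  shows "decided xs (phi k)"
proof -
  have "\<not> (k = length xs \<or> \<not> decided xs (phi k))"
    using assms unfolding settled_count_def by (rule not_less_Least)
  then show ?thesis by simp
qed

lemma settled_count_ge:
  assumes "J \<le> length xs" and "\<forall>k<J. decided xs (phi k)"
  shows "J \<le> settled_count phi xs"
proof (rule ccontr)
  assume "\<not> J \<le> settled_count phi xs"
  moreover have "settled_count phi xs = length xs \<or> \<not> decided xs (phi (settled_count phi xs))"
    unfolding settled_count_def by (rule LeastI[of _ "length xs"]) simp
  ultimately show False using assms by simp
qed

lemma settled_count_tendsto:
  "filterlim (\<lambda>n. settled_count phi (map f [0..<n])) at_top sequentially"
  unfolding filterlim_at_top
proof
  fix J
  have "\<forall>\<^sub>F n in sequentially. \<forall>k\<in>{..<J}. decided (map f [0..<n]) (phi k)"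
    by (simp add: eventually_ball_finite_distrib eventually_decided_prefix)
  moreover have "\<forall>\<^sub>F n in sequentially. J \<le> n"
    by (rule eventually_ge_at_top)
  ultimately show "\<forall>\<^sub>F n in sequentially. J \<le> settled_count phi (map f [0..<n])"
    by eventually_elim (simp add: settled_count_ge)
qed

definition simulate :: "(nat \<Rightarrow> fm) \<Rightarrow> (nat list \<Rightarrow> nat) \<Rightarrow> nat list \<Rightarrow> nat" where
  "simulate phi B xs = B (map (\<lambda>k. fval (zero_ext xs) (phi k)) [0..<settled_count phi xs])"

lemma simulate_prefix:
  "simulate phi B (map f [0..<n]) = B (map (\<lambda>k. fval f (phi k)) [0..<settled_count phi (map f [0..<n])])"
  unfolding simulate_def fval_def
  by (intro arg_cong[where f = B] map_cong refl) (simp add: decided_prefix_holds settled_count_decided)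

(* Since the number of replayed answers tends to infinity, the simulation inherits Bob's
   eventual correctness. *)
lemma simulate_predicts:
  assumes "predicts B (\<lambda>k. fval f (phi k)) c"
  shows "predicts (simulate phi B) f c"
  using eventually_compose_filterlim[OF assms[unfolded predicts_def] settled_count_tendsto]
  unfolding predicts_def simulate_prefix .

lemma guessable_if_bob_wins:
  assumes "bob_wins S Sig phi B"
  shows "guessable S"
  using assms simulate_predicts
  unfolding guessable_iff_predicts bob_wins_iff_predicts by blast

(* Codes for terms and sentences, symbols replaced by their index in a countable signature.
   The code types are countable, and decoding is onto the sentences of the signature. *)
datatype code_trm =
    CConst nat | CApp nat "code_trm list" | CFApp code_trm | CGApp nat "code_trm list" code_trm

datatype code_fm =
    CEq code_trm code_trm | CRel nat "code_trm list" | CNeg code_fm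
  | CConj code_fm code_fm | CDisj code_fm code_fm | CImp code_fm code_fm

instance code_trm :: countable by countable_datatype
instance code_fm :: countable by countable_datatype

(* Decoding; codes naming a symbol of the wrong kind decode to a dummy. *)
fun decode_trm :: "sym set \<Rightarrow> code_trm \<Rightarrow> trm" where
  "decode_trm Sig (CConst n) = Const n"
| "decode_trm Sig (CApp i cs) =
     (case from_nat_into Sig i of
        SFun n w \<Rightarrow> App n w (map (decode_trm Sig) cs)
      | _ \<Rightarrow> Const 0)"
| "decode_trm Sig (CFApp c) = FApp (decode_trm Sig c)"
| "decode_trm Sig (CGApp i cs c) =
     (case from_nat_into Sig i of
        SG n G \<Rightarrow> GApp n G (map (decode_trm Sig) cs) (decode_trm Sig c)
      | _ \<Rightarrow> Const 0)"

fun decode_fm :: "sym set \<Rightarrow> code_fm \<Rightarrow> fm" where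
  "decode_fm Sig (CEq a b) = Eq (decode_trm Sig a) (decode_trm Sig b)"
| "decode_fm Sig (CRel i cs) =
     (case from_nat_into Sig i of
        SPred n p \<Rightarrow> Rel n p (map (decode_trm Sig) cs)
      | _ \<Rightarrow> Eq (Const 0) (Const 0))"
| "decode_fm Sig (CNeg a) = Neg (decode_fm Sig a)"
| "decode_fm Sig (CConj a b) = Conj (decode_fm Sig a) (decode_fm Sig b)"
| "decode_fm Sig (CDisj a b) = Disj (decode_fm Sig a) (decode_fm Sig b)"
| "decode_fm Sig (CImp a b) = Imp (decode_fm Sig a) (decode_fm Sig b)"

lemma in_range_map:
  assumes "\<And>x. x \<in> set xs \<Longrightarrow> x \<in> range d"
  shows "xs \<in> range (map d)"
proof -
  have "xs \<in> lists (range d)" using assms by (simp add: in_lists_conv_set)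
  then show ?thesis by (simp add: lists_image)
qed

lemma decode_trm_onto:
  assumes "countable Sig" "syms_trm t \<subseteq> Sig"
  shows "t \<in> range (decode_trm Sig)"
  using assms(2)
proof (induction t)
  case (Const n)
  show ?case by (metis decode_trm.simps(1) rangeI)
next
  case (App n w ts)
  have "ts \<in> range (map (decode_trm Sig))"
    using App by (intro in_range_map) auto
  then obtain cs where "ts = map (decode_trm Sig) cs" by blast
  moreover have "from_nat_into Sig (to_nat_on Sig (SFun n w)) = SFun n w"
    using App.prems assms(1) by simp
  ultimately have "decode_trm Sig (CApp (to_nat_on Sig (SFun n w)) cs) = App n w ts"
    by simp
  then show ?case by (metis rangeI)
next
  case (FApp t)
  then obtain c where "t = decode_trm Sig c" by auto
  then have "decode_trm Sig (CFApp c) = FApp t" by simp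
  then show ?case by (metis rangeI)
next
  case (GApp n G ts t)
  have "ts \<in> range (map (decode_trm Sig))"
    using GApp.prems by (intro in_range_map GApp.IH(1)) auto
  then obtain cs where "ts = map (decode_trm Sig) cs" by blast
  moreover obtain c where "t = decode_trm Sig c" using GApp by auto
  moreover have "from_nat_into Sig (to_nat_on Sig (SG n G)) = SG n G"
    using GApp.prems assms(1) by simp
  ultimately have "decode_trm Sig (CGApp (to_nat_on Sig (SG n G)) cs c) = GApp n G ts t"
    by simp
  then show ?case by (metis rangeI)
qed

lemma decode_fm_onto:
  assumes "countable Sig" "syms_fm \<phi> \<subseteq> Sig"
  shows "\<phi> \<in> range (decode_fm Sig)"
  using assms(2)
proof (induction \<phi>)
  case (Eq s t)
  then obtain c d where "s = decode_trm Sig c" "t = decode_trm Sig d"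
    using decode_trm_onto[OF assms(1)] by (metis Un_subset_iff imageE syms_fm.simps(1))
  then have "decode_fm Sig (CEq c d) = Eq s t" by simp
  then show ?case by (metis rangeI)
next
  case (Rel n p ts)
  have "ts \<in> range (map (decode_trm Sig))"
    using Rel.prems decode_trm_onto[OF assms(1)] by (intro in_range_map) auto
  then obtain cs where "ts = map (decode_trm Sig) cs" by blast
  moreover have "from_nat_into Sig (to_nat_on Sig (SPred n p)) = SPred n p"
    using Rel.prems assms(1) by simp
  ultimately have "decode_fm Sig (CRel (to_nat_on Sig (SPred n p)) cs) = Rel n p ts"
    by simp
  then show ?case by (metis rangeI)
next
  case (Neg a)
  then obtain c where "decode_fm Sig c = a" by auto
  then have "decode_fm Sig (CNeg c) = Neg a" by simp
  then show ?case by (metis rangeI)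
next
  case (Conj a b)
  then obtain c d where "decode_fm Sig c = a" "decode_fm Sig d = b" by auto
  then have "decode_fm Sig (CConj c d) = Conj a b" by simp
  then show ?case by (metis rangeI)
next
  case (Disj a b)
  then obtain c d where "decode_fm Sig c = a" "decode_fm Sig d = b" by auto
  then have "decode_fm Sig (CDisj c d) = Disj a b" by simp
  then show ?case by (metis rangeI)
next
  case (Imp a b)
  then obtain c d where "decode_fm Sig c = a" "decode_fm Sig d = b" by auto
  then have "decode_fm Sig (CImp c d) = Imp a b" by simp
  then show ?case by (metis rangeI)
qed

lemma countable_qf_sentences:
  assumes "countable Sig"
  shows "countable (qf_sentences Sig)"
proof (rule countable_subset)
  show "qf_sentences Sig \<subseteq> range (decode_fm Sig)"
    using decode_fm_onto[OF assms] unfolding qf_sentences_def by blast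
qed simp

definition interleave :: "(nat \<Rightarrow> 'a) \<Rightarrow> (nat \<Rightarrow> 'a) \<Rightarrow> nat \<Rightarrow> 'a" where
  "interleave a b k = (if even k then a (k div 2) else b (k div 2))"

lemma range_interleave: "range (interleave a b) = range a \<union> range b"
proof (intro equalityI subsetI)
  fix x assume "x \<in> range a \<union> range b"
  then consider i where "x = a i" | i where "x = b i" by blast
  then show "x \<in> range (interleave a b)"
  proof cases
    case 1
    then have "interleave a b (2 * i) = x" unfolding interleave_def by simp
    then show ?thesis by (metis rangeI)
  next
    case 2
    then have "interleave a b (2 * i + 1) = x" unfolding interleave_def by simp
    then show ?thesis by (metis rangeI)
  qed
qed (auto simp: interleave_def)

(* Bob's move: repeat the answer to the latest sentence at an even position of the listing. *)
definition even_reader :: "nat list \<Rightarrow> nat" where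
  "even_reader l = l ! (2 * ((length l - 1) div 2))"

lemma even_reader_prefix: "even_reader (map a [0..<Suc n]) = a (2 * (n div 2))"
proof -
  have "2 * (n div 2) < Suc n" by linarith
  then show ?thesis unfolding even_reader_def by (simp del: upt_Suc)
qed

lemma predicts_even_reader:
  assumes "\<forall>\<^sub>F m in sequentially. a (2 * m) = c"
  shows "predicts even_reader a c"
proof -
  obtain N where N: "\<And>m. N \<le> m \<Longrightarrow> a (2 * m) = c"
    using assms unfolding eventually_sequentially by blast
  have "even_reader (map a [0..<Suc n]) = c" if "2 * N \<le> n" for n
    using N[of "n div 2"] that by (simp add: even_reader_prefix del: upt_Suc)
  then show ?thesis
    unfolding predicts_Suc eventually_sequentially by blast
qed

(* G as the unary symbol G o f (with n = 0); wf_sym requires the value 0 off this arity. *)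
definition guess_fun :: "(nat list \<Rightarrow> nat) \<Rightarrow> nat list \<Rightarrow> nat list \<Rightarrow> nat" where
  "guess_fun G xs ys = (if xs = [] \<and> ys \<noteq> [] then G ys else 0)"

definition guess_sig :: "(nat list \<Rightarrow> nat) \<Rightarrow> sym set" where
  "guess_sig G = insert (SG 0 (guess_fun G)) (range SConst)"

definition guess_sentence :: "(nat list \<Rightarrow> nat) \<Rightarrow> nat \<Rightarrow> fm" where
  "guess_sentence G k = Eq (GApp 0 (guess_fun G) [] (Const k)) (Const 1)"

lemma holds_guess_sentence:
  "holds f (guess_sentence G k) \<longleftrightarrow> G (map f [0..<Suc k]) = 1"
  unfolding guess_sentence_def guess_fun_def by (simp del: upt_Suc)

lemma guess_sig_wf: "guess_sig G \<subseteq> Collect wf_sym"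
  unfolding guess_sig_def wf_sym_def guess_fun_def by auto

lemma guess_sentence_qf: "guess_sentence G k \<in> qf_sentences (guess_sig G)"
  using guess_sig_wf[of G]
  unfolding qf_sentences_def guess_sentence_def guess_sig_def by auto

lemma bob_wins_if_guessable:
  assumes "guessable S"
  shows "bob_has_winning_strategy S"
proof -
  from assms obtain G where G: "\<And>f. predicts G f (if f \<in> S then 1 else 0)"
    unfolding guessable_iff_predicts by blast
  define Q where "Q = qf_sentences (guess_sig G)"
  define phi where "phi = interleave (guess_sentence G) (from_nat_into Q)"
  have "countable (guess_sig G)"
    unfolding guess_sig_def by simp
  then have "countable Q"
    unfolding Q_def by (rule countable_qf_sentences)
  moreover have sentences_in_Q: "range (guess_sentence G) \<subseteq> Q"
    using guess_sentence_qf unfolding Q_def by blast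
  ultimately have "range (from_nat_into Q) = Q"
    by (intro range_from_nat_into) blast+
  with sentences_in_Q have "range phi = Q"
    unfolding phi_def range_interleave by blast
  have "predicts even_reader (\<lambda>k. fval f (phi k)) (if f \<in> S then 1 else 0)" for f
  proof (rule predicts_even_reader)
    have "\<forall>\<^sub>F m in sequentially. G (map f [0..<Suc m]) = (if f \<in> S then 1 else 0)"
      using G[of f] unfolding predicts_Suc .
    then show "\<forall>\<^sub>F m in sequentially. fval f (phi (2 * m)) = (if f \<in> S then 1 else 0)"
      by eventually_elim
        (simp add: phi_def interleave_def fval_def holds_guess_sentence del: upt_Suc)
  qed
  then have "bob_wins S (guess_sig G) phi even_reader"
    unfolding bob_wins_iff_predicts by blast
  with \<open>countable (guess_sig G)\<close> guess_sig_wf \<open>range phi = Q\<close> show ?thesis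
    unfolding bob_has_winning_strategy_def Q_def by blast
qed

theorem mainTheorem6:
  fixes S :: "(nat \<Rightarrow> nat) set"
  shows "bob_has_winning_strategy S \<longleftrightarrow> guessable S"
proof
  assume "bob_has_winning_strategy S"
  then obtain Sig phi B where "bob_wins S Sig phi B"
    unfolding bob_has_winning_strategy_def by blast
  then show "guessable S" by (rule guessable_if_bob_wins)
qed (rule bob_wins_if_guessable)
end
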